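(* Let $C,A_1,\dots,A_m\in\mathbb{S}^n$, $b\in\mathbb{R}^m$, and write $\mathcal{L}(y)=C-\sum_{i=1}^my_iA_i$. Let $(U,V)\in\mathbb{R}^{n\times n}$ be invertible with $U\in\mathbb{R}^{n\times d}$, $V\in\mathbb{R}^{n\times(n-d)}$, $U^TV=0$. Consider the problem (R/D-SDP): minimize $C\cdot X$ subject to $A_i\cdot X=b_i$ ($i=1,\dots,m$) and $X=(U,V)\begin{pmatrix}W&Z\\Z^T&R\end{pmatrix}(U,V)^T$ with $W\in\mathbb{S}^d_+$, $R\in\mathbb{S}^{n-d}$, $Z\in\mathbb{R}^{d\times(n-d)}$. Assume (R/D-SDP) has an optimal solution and that $$\{y\in\mathbb{R}^m: V^T\mathcal{L}(y)V=0\}=\{y\in\mathbb{R}^m: V^T\mathcal{L}(y)V=0,\ V^T\mathcal{L}(y)U=0\}.$$ Then (R/D-SDP) has an optimal solution with $Z=0$.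
   Context: $\mathbb{S}^n$ is the space of real symmetric $n\times n$ matrices with trace inner product $A\cdot B=\operatorname{trace}(AB)$; $\mathbb{S}^d_+$ is the positive semidefinite cone. *)

theory Defs
  imports "Jordan_Normal_Form.Matrix"
begin

definition mtrace :: "real mat \<Rightarrow> real" where
  "mtrace M = (\<Sum>i<dim_row M. M $$ (i, i))"

definition tinner :: "real mat \<Rightarrow> real mat \<Rightarrow> real" where
  "tinner A B = mtrace (A * B)"

definition symmetric_mat :: "nat \<Rightarrow> real mat \<Rightarrow> bool" where
  "symmetric_mat k M \<longleftrightarrow> M \<in> carrier_mat k k \<and> transpose_mat M = M"

definition psd_mat :: "nat \<Rightarrow> real mat \<Rightarrow> bool" where
  "psd_mat k M \<longleftrightarrow> symmetric_mat k M \<and> (\<forall>v \<in> carrier_vec k. v \<bullet> (M *\<^sub>v v) \<ge> 0)"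

definition Lmap :: "nat \<Rightarrow> nat \<Rightarrow> real mat \<Rightarrow> (nat \<Rightarrow> real mat) \<Rightarrow> real vec \<Rightarrow> real mat" where
  "Lmap n m C A y = mat n n (\<lambda>(i, j). C $$ (i, j) - (\<Sum>k<m. y $ k * A k $$ (i, j)))"

definition concat_cols :: "nat \<Rightarrow> nat \<Rightarrow> real mat \<Rightarrow> real mat \<Rightarrow> real mat" where
  "concat_cols n d U V = mat n n (\<lambda>(i, j). if j < d then U $$ (i, j) else V $$ (i, j - d))"

definition Xof :: "nat \<Rightarrow> nat \<Rightarrow> real mat \<Rightarrow> real mat \<Rightarrow> real mat \<Rightarrow> real mat \<Rightarrow> real mat \<Rightarrow> real mat" where
  "Xof n d U V W Z R =
     concat_cols n d U V * four_block_mat W Z (transpose_mat Z) R * transpose_mat (concat_cols n d U V)"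

definition RD_feasible ::
  "nat \<Rightarrow> nat \<Rightarrow> nat \<Rightarrow> (nat \<Rightarrow> real mat) \<Rightarrow> real vec \<Rightarrow> real mat \<Rightarrow> real mat
   \<Rightarrow> real mat \<Rightarrow> real mat \<Rightarrow> real mat \<Rightarrow> bool" where
  "RD_feasible n d m A b U V W Z R \<longleftrightarrow>
     psd_mat d W \<and> symmetric_mat (n - d) R \<and> Z \<in> carrier_mat d (n - d) \<and>
     (\<forall>i<m. tinner (A i) (Xof n d U V W Z R) = b $ i)"

definition RD_optimal ::
  "nat \<Rightarrow> nat \<Rightarrow> nat \<Rightarrow> real mat \<Rightarrow> (nat \<Rightarrow> real mat) \<Rightarrow> real vec \<Rightarrow> real mat \<Rightarrow> real mat
   \<Rightarrow> real mat \<Rightarrow> real mat \<Rightarrow> real mat \<Rightarrow> bool" where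
  "RD_optimal n d m C A b U V W Z R \<longleftrightarrow>
     RD_feasible n d m A b U V W Z R \<and>
     (\<forall>W' Z' R'. RD_feasible n d m A b U V W' Z' R' \<longrightarrow>
        tinner C (Xof n d U V W Z R) \<le> tinner C (Xof n d U V W' Z' R'))"

end

theory Submission
  imports Defs
begin

(*
  Write X = P B P^T with P = (U, V) and B = [W Z; Z^T R]; then C . X = G0 . B and
  A_i . X = G_i . B with G0 = P^T C P and G_i = P^T A_i P.  Let B be optimal.  Perturbing
  B away from its W-block keeps W positive semidefinite, so first-order optimality and
  finite-dimensional duality give a multiplier y with G0 = sum_i y_i G_i outside the
  W-block; in particular V^T L(y) V = 0 and V^T L(y) U = 0.  Removing Z changes the
  constraint values, and a change of R can compensate this exactly when every y' for which
  sum_i y'_i G_i vanishes on the R-block also vanishes on the Z-block.  Applying the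
  hypothesis to y + y' gives exactly that.  The resulting perturbation lives outside the
  W-block, where G0 agrees with sum_i y_i G_i, so it leaves the objective unchanged.
*)

lemma kernel_inclusion_along_direction:
  fixes f :: "'j \<Rightarrow> ('a \<Rightarrow> real) \<Rightarrow> real" and g :: "('a \<Rightarrow> real) \<Rightarrow> real"
  assumes "\<forall>i\<in>insert j J. \<forall>x e t. f i (\<lambda>k. x k - t * e k) = f i x - t * f i e"
    and "\<forall>x e t. g (\<lambda>k. x k - t * e k) = g x - t * g e"
    and "\<forall>x. (\<forall>i\<in>insert j J. f i x = 0) \<longrightarrow> g x = 0"
    and "f j e \<noteq> 0"
  shows "\<forall>x. (\<forall>i\<in>J. f i x - f i e / f j e * f j x = 0) \<longrightarrow> g x - g e / f j e * f j x = 0"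
proof (intro allI impI)
  fix x assume x: "\<forall>i\<in>J. f i x - f i e / f j e * f j x = 0"
  define x' where "x' = (\<lambda>k. x k - f j x / f j e * e k)"
  have f_x': "f i x' = f i x - f j x / f j e * f i e" if "i \<in> insert j J" for i
    using assms(1) that unfolding x'_def by blast
  have "f i x' = 0" if "i \<in> insert j J" for i
  proof (cases "i = j")
    case True
    then show ?thesis using f_x' assms(4) by simp
  next
    case False
    then have "f i x = f i e / f j e * f j x" using x that by simp
    then show ?thesis using f_x' that by simp
  qed
  then have "g x' = 0" using assms(3) by blast
  moreover have "g x' = g x - f j x / f j e * g e"
    using assms(2) unfolding x'_def by blast
  ultimately show "g x - g e / f j e * f j x = 0" by (simp add: algebra_simps)
qed

lemma lincomb_of_kernel_inclusion:
  fixes f :: "'j \<Rightarrow> ('a \<Rightarrow> real) \<Rightarrow> real" and g :: "('a \<Rightarrow> real) \<Rightarrow> real"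
  assumes "finite J"
    and "\<forall>j\<in>J. \<forall>x e t. f j (\<lambda>k. x k - t * e k) = f j x - t * f j e"
    and "\<forall>x e t. g (\<lambda>k. x k - t * e k) = g x - t * g e"
    and "\<forall>x. (\<forall>j\<in>J. f j x = 0) \<longrightarrow> g x = 0"
  shows "\<exists>y. \<forall>x. g x = (\<Sum>j\<in>J. y j * f j x)"
  using assms
proof (induction J arbitrary: f g rule: finite_induct)
  case empty
  then show ?case by auto
next
  case (insert j J)
  show ?case
  proof (cases "\<forall>e. f j e = 0")
    case True
    have "\<exists>y. \<forall>x. g x = (\<Sum>i\<in>J. y i * f i x)"
      by (rule insert.IH) (use insert.prems True in auto)
    with True insert.hyps show ?thesis by auto
  next
    case False
    then obtain e where e: "f j e \<noteq> 0" by blast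
    have f_j: "f j (\<lambda>k. x k - t * e k) = f j x - t * f j e" for x e t
      using insert.prems(1) by auto
    \<comment> \<open>Apply the induction hypothesis to all functionals projected along \<open>e\<close> onto the kernel of \<open>f j\<close>.\<close>
    define f' where "f' i x = f i x - f i e / f j e * f j x" for i x
    define g' where "g' x = g x - g e / f j e * f j x" for x
    have "\<exists>y. \<forall>x. g' x = (\<Sum>i\<in>J. y i * f' i x)"
    proof (rule insert.IH)
      show "\<forall>i\<in>J. \<forall>x e' t. f' i (\<lambda>k. x k - t * e' k) = f' i x - t * f' i e'"
        using insert.prems(1) unfolding f'_def f_j by (simp add: algebra_simps)
      show "\<forall>x e' t. g' (\<lambda>k. x k - t * e' k) = g' x - t * g' e'"
        using insert.prems(2) unfolding g'_def f_j by (simp add: algebra_simps)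
      show "\<forall>x. (\<forall>i\<in>J. f' i x = 0) \<longrightarrow> g' x = 0"
        using kernel_inclusion_along_direction[where f = f and g = g and j = j and J = J and e = e,
            OF insert.prems e]
        unfolding f'_def g'_def .
    qed
    then obtain y where y: "\<forall>x. g' x = (\<Sum>i\<in>J. y i * f' i x)" by blast
    define c where "c = (g e - (\<Sum>i\<in>J. y i * f i e)) / f j e"
    have "g x = (\<Sum>i\<in>insert j J. (y(j := c)) i * f i x)" for x
    proof -
      have "g' x = (\<Sum>i\<in>J. y i * f i x) - (\<Sum>i\<in>J. y i * f i e) / f j e * f j x"
        using y unfolding f'_def
        by (simp add: right_diff_distrib sum_subtractf sum_distrib_right sum_divide_distrib mult.assoc)
      then have "g x = (\<Sum>i\<in>J. y i * f i x) + c * f j x"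
        unfolding g'_def c_def by (simp add: diff_divide_distrib left_diff_distrib)
      moreover have "(\<Sum>i\<in>J. (y(j := c)) i * f i x) = (\<Sum>i\<in>J. y i * f i x)"
        using insert.hyps by (intro sum.cong) auto
      ultimately show ?thesis
        using insert.hyps by simp
    qed
    then show ?thesis by blast
  qed
qed

lemma mtrace_mult:
  assumes "M \<in> carrier_mat a b" "N \<in> carrier_mat b a"
  shows "mtrace (M * N) = (\<Sum>i<a. \<Sum>k<b. M $$ (i, k) * N $$ (k, i))"
  using assms unfolding mtrace_def
  by (auto simp: scalar_prod_def atLeast0LessThan intro!: sum.cong)

lemma mtrace_mult_comm:
  assumes "M \<in> carrier_mat a b" "N \<in> carrier_mat b a"
  shows "mtrace (M * N) = mtrace (N * M)"
  unfolding mtrace_mult[OF assms] mtrace_mult[OF assms(2,1)]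
  by (subst sum.swap) (simp add: mult.commute)

lemma tinner_eq_sum:
  assumes "G \<in> carrier_mat n n" "D \<in> carrier_mat n n"
  shows "tinner G D = (\<Sum>a<n. \<Sum>c<n. G $$ (a, c) * D $$ (c, a))"
  unfolding tinner_def using assms by (rule mtrace_mult)

lemma symmetric_matD:
  assumes "symmetric_mat n G" "a < n" "c < n"
  shows "G $$ (a, c) = G $$ (c, a)"
  using assms unfolding symmetric_mat_def by (metis carrier_matD index_transpose_mat(1))

lemma symmetric_matI:
  assumes "G \<in> carrier_mat n n" "\<And>a c. a < n \<Longrightarrow> c < n \<Longrightarrow> G $$ (a, c) = G $$ (c, a)"
  shows "symmetric_mat n G"
  using assms unfolding symmetric_mat_def by auto

lemma tinner_symmetric_left:
  assumes "symmetric_mat n G" "D \<in> carrier_mat n n"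
  shows "tinner G D = (\<Sum>a<n. \<Sum>c<n. G $$ (a, c) * D $$ (a, c))"
proof -
  have "tinner G D = (\<Sum>c<n. \<Sum>a<n. G $$ (c, a) * D $$ (a, c))"
    using assms unfolding symmetric_mat_def by (simp add: tinner_eq_sum)
  also have "\<dots> = (\<Sum>a<n. \<Sum>c<n. G $$ (a, c) * D $$ (a, c))"
    using symmetric_matD[OF assms(1)] by (subst sum.swap) (auto intro!: sum.cong)
  finally show ?thesis .
qed

lemma tinner_add_right:
  assumes "G \<in> carrier_mat n n" "B \<in> carrier_mat n n" "D \<in> carrier_mat n n"
  shows "tinner G (B + D) = tinner G B + tinner G D"
  using assms by (simp add: tinner_eq_sum[of _ n] distrib_left sum.distrib)

lemma tinner_congruence:
  assumes "M \<in> carrier_mat n n" "P \<in> carrier_mat n n" "B \<in> carrier_mat n n"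
  shows "tinner M (P * B * transpose_mat P) = tinner (transpose_mat P * M * P) B"
proof -
  have "tinner M (P * B * transpose_mat P) = mtrace ((M * P * B) * transpose_mat P)"
    unfolding tinner_def using assms by (simp add: assoc_mult_mat[of _ n n _ n _ n])
  also have "\<dots> = mtrace (transpose_mat P * (M * P * B))"
    using assms by (intro mtrace_mult_comm[of _ n n]) auto
  also have "\<dots> = tinner (transpose_mat P * M * P) B"
    unfolding tinner_def using assms by (simp add: assoc_mult_mat[of _ n n _ n _ n])
  finally show ?thesis .
qed

lemma symmetric_congruence:
  assumes "symmetric_mat n M" "P \<in> carrier_mat n n"
  shows "symmetric_mat n (transpose_mat P * M * P)"
proof -
  have M: "M \<in> carrier_mat n n" "transpose_mat M = M"
    using assms(1) unfolding symmetric_mat_def by auto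
  have "transpose_mat (transpose_mat P * M * P) = transpose_mat P * transpose_mat (transpose_mat P * M)"
    using M assms(2) by (subst transpose_mult[of _ n n]) auto
  also have "\<dots> = transpose_mat P * M * P"
    using M assms(2) by (subst transpose_mult[of _ n n]) auto
  finally show ?thesis
    using M assms(2) unfolding symmetric_mat_def by auto
qed

lemma index_Lmap:
  "a < n \<Longrightarrow> c < n \<Longrightarrow> Lmap n m C A y $$ (a, c) = C $$ (a, c) - (\<Sum>k<m. y $ k * A k $$ (a, c))"
  unfolding Lmap_def by simp

lemma symmetric_Lmap:
  assumes "symmetric_mat n C" "\<forall>k<m. symmetric_mat n (A k)"
  shows "symmetric_mat n (Lmap n m C A y)"
  using assms by (intro symmetric_matI) (auto simp: Lmap_def symmetric_matD intro!: sum.cong)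

lemma tinner_Lmap:
  assumes "C \<in> carrier_mat n n" "\<forall>k<m. A k \<in> carrier_mat n n" "D \<in> carrier_mat n n"
  shows "tinner (Lmap n m C A y) D = tinner C D - (\<Sum>k<m. y $ k * tinner (A k) D)"
  using assms
  by (simp add: tinner_eq_sum[of _ n] Lmap_def left_diff_distrib sum_subtractf sum_distrib_left
      sum_distrib_right mult.assoc sum.swap[of _ "{..<m}"])

lemma symmetric_mat_sum_swap:
  assumes "symmetric_mat n G"
  shows "(\<Sum>a<n. \<Sum>c<n. G $$ (a, c) * F (c, a)) = (\<Sum>a<n. \<Sum>c<n. G $$ (a, c) * F (a, c))"
  using tinner_eq_sum[of G n "mat n n F"] tinner_symmetric_left[OF assms, of "mat n n F"] assms
  unfolding symmetric_mat_def by simp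

definition off_block_sym :: "nat \<Rightarrow> nat \<Rightarrow> (nat \<times> nat \<Rightarrow> real) \<Rightarrow> real mat" where
  "off_block_sym n d x = mat n n (\<lambda>(a, c). if a < d \<and> c < d then 0 else x (a, c) + x (c, a))"

lemma symmetric_off_block_sym: "symmetric_mat n (off_block_sym n d x)"
  unfolding off_block_sym_def by (intro symmetric_matI) auto

lemma tinner_off_block_sym_diff:
  assumes "H \<in> carrier_mat n n"
  shows "tinner H (off_block_sym n d (\<lambda>k. x k - t * e k)) =
    tinner H (off_block_sym n d x) - t * tinner H (off_block_sym n d e)"
proof -
  have "tinner H (off_block_sym n d (\<lambda>k. x k - t * e k)) = (\<Sum>a<n. \<Sum>c<n.
      H $$ (a, c) * off_block_sym n d x $$ (c, a) - t * (H $$ (a, c) * off_block_sym n d e $$ (c, a)))"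
    using assms unfolding off_block_sym_def
    by (auto simp: tinner_eq_sum[of _ n] algebra_simps intro!: sum.cong)
  then show ?thesis
    using assms unfolding off_block_sym_def by (simp add: tinner_eq_sum[of _ n] sum_subtractf sum_distrib_left)
qed

lemma tinner_off_block_sym_uminus:
  assumes "H \<in> carrier_mat n n"
  shows "tinner H (off_block_sym n d (\<lambda>k. - x k)) = - tinner H (off_block_sym n d x)"
proof -
  have "tinner H (off_block_sym n d (\<lambda>k. - x k)) = (\<Sum>a<n. \<Sum>c<n. - (H $$ (a, c) * off_block_sym n d x $$ (c, a)))"
    using assms unfolding off_block_sym_def by (auto simp: tinner_eq_sum[of _ n] algebra_simps intro!: sum.cong)
  then show ?thesis
    using assms unfolding off_block_sym_def by (simp add: tinner_eq_sum[of _ n] sum_negf)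
qed

lemma tinner_off_block_sym_indicator:
  assumes "symmetric_mat n G" "d \<le> p" "p < n" "q < n"
  shows "tinner G (off_block_sym n d (\<lambda>k. of_bool (k = (p, q)))) = 2 * G $$ (p, q)"
proof -
  have "tinner G (off_block_sym n d (\<lambda>k. of_bool (k = (p, q)))) =
        (\<Sum>a<n. \<Sum>c<n. (if c = q then if a = p then G $$ (p, q) else 0 else 0)
                            + (if c = p then if a = q then G $$ (q, p) else 0 else 0))"
    using assms unfolding off_block_sym_def by (auto simp: tinner_symmetric_left intro!: sum.cong)
  also have "\<dots> = G $$ (p, q) + G $$ (q, p)"
    using assms by (simp add: sum.distrib sum.delta)
  finally show ?thesis using symmetric_matD[OF assms(1)] assms by simp
qed

lemma off_block_multiplier:
  assumes "d \<le> n" "symmetric_mat n G0" "\<forall>i<m. symmetric_mat n (G i)"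
    and first_order: "\<forall>D. symmetric_mat n D \<longrightarrow> (\<forall>a<d. \<forall>c<d. D $$ (a, c) = 0) \<longrightarrow>
        (\<forall>i<m. tinner (G i) D = 0) \<longrightarrow> 0 \<le> tinner G0 D"
  shows "\<exists>y\<in>carrier_vec m. \<forall>a<n. \<forall>c<n. \<not> (a < d \<and> c < d) \<longrightarrow> Lmap n m G0 G y $$ (a, c) = 0"
proof -
  have carrier: "G0 \<in> carrier_mat n n" "\<forall>i<m. G i \<in> carrier_mat n n"
    using assms(2,3) unfolding symmetric_mat_def by auto
  have W_block: "\<forall>a<d. \<forall>c<d. off_block_sym n d x $$ (a, c) = 0" for x
    using assms(1) unfolding off_block_sym_def by auto
  have "\<exists>y. \<forall>x. tinner G0 (off_block_sym n d x) = (\<Sum>i\<in>{..<m}. y i * tinner (G i) (off_block_sym n d x))"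
  proof (rule lincomb_of_kernel_inclusion)
    show "\<forall>x. (\<forall>i\<in>{..<m}. tinner (G i) (off_block_sym n d x) = 0) \<longrightarrow> tinner G0 (off_block_sym n d x) = 0"
    proof (intro allI impI)
      fix x assume kernel: "\<forall>i\<in>{..<m}. tinner (G i) (off_block_sym n d x) = 0"
      \<comment> \<open>Both directions \<open>\<plusminus> off_block_sym n d x\<close> are admissible.\<close>
      have "\<forall>i<m. tinner (G i) (off_block_sym n d (\<lambda>k. - x k)) = 0"
        using kernel carrier(2) tinner_off_block_sym_uminus by simp
      then have "0 \<le> tinner G0 (off_block_sym n d (\<lambda>k. - x k))"
        using first_order symmetric_off_block_sym W_block by blast
      moreover have "0 \<le> tinner G0 (off_block_sym n d x)"
        using first_order symmetric_off_block_sym W_block kernel by simp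
      ultimately show "tinner G0 (off_block_sym n d x) = 0"
        using tinner_off_block_sym_uminus[OF carrier(1), of d x] by linarith
    qed
  qed (use carrier tinner_off_block_sym_diff in auto)
  then obtain y where y: "\<And>x. tinner G0 (off_block_sym n d x) = (\<Sum>i<m. y i * tinner (G i) (off_block_sym n d x))"
    by auto
  have lower: "Lmap n m G0 G (vec m y) $$ (p, q) = 0" if "d \<le> p" "p < n" "q < n" for p q
  proof -
    have "2 * G0 $$ (p, q) = (\<Sum>i<m. y i * (2 * G i $$ (p, q)))"
      using y[of "\<lambda>k. of_bool (k = (p, q))"] tinner_off_block_sym_indicator[OF _ that] assms(2,3)
      by simp
    also have "\<dots> = 2 * (\<Sum>i<m. y i * G i $$ (p, q))"
      by (simp add: sum_distrib_left mult.left_commute)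
    finally show ?thesis
      using that by (simp add: index_Lmap)
  qed
  have "Lmap n m G0 G (vec m y) $$ (a, c) = 0" if "a < n" "c < n" "\<not> (a < d \<and> c < d)" for a c
    using that lower[of a c] lower[of c a] symmetric_matD[OF symmetric_Lmap[OF assms(2,3)]]
    by (cases "d \<le> a") auto
  then show ?thesis by (intro bexI[of _ "vec m y"]) auto
qed

lemma lower_right_block_range:
  fixes G :: "nat \<Rightarrow> real mat" and h :: "nat \<Rightarrow> real"
  assumes G: "\<forall>i<m. symmetric_mat n (G i)"
    and annihilates: "\<forall>y. (\<forall>p<n. \<forall>q<n. d \<le> p \<longrightarrow> d \<le> q \<longrightarrow> (\<Sum>i<m. y i * G i $$ (p, q)) = 0) \<longrightarrow>
        (\<Sum>i<m. y i * h i) = 0"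
  shows "\<exists>S. (\<forall>a c. S (a, c) = S (c, a)) \<and> (\<forall>a c. \<not> (d \<le> a \<and> d \<le> c) \<longrightarrow> S (a, c) = 0) \<and>
    (\<forall>i<m. h i = (\<Sum>a<n. \<Sum>c<n. G i $$ (a, c) * S (a, c)))"
proof -
  define f :: "nat \<times> nat \<Rightarrow> (nat \<Rightarrow> real) \<Rightarrow> real" where
    "f pq y = (if d \<le> fst pq \<and> d \<le> snd pq then \<Sum>i<m. y i * G i $$ pq else 0)" for pq y
  have "\<exists>r. \<forall>y. (\<Sum>i<m. y i * h i) = (\<Sum>pq\<in>{..<n} \<times> {..<n}. r pq * f pq y)"
  proof (rule lincomb_of_kernel_inclusion)
    show "\<forall>pq\<in>{..<n} \<times> {..<n}. \<forall>x e t. f pq (\<lambda>k. x k - t * e k) = f pq x - t * f pq e"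
      unfolding f_def by (auto simp: left_diff_distrib sum_subtractf sum_distrib_left mult.assoc)
    show "\<forall>x e t. (\<Sum>i<m. (x i - t * e i) * h i) = (\<Sum>i<m. x i * h i) - t * (\<Sum>i<m. e i * h i)"
      by (simp add: left_diff_distrib sum_subtractf sum_distrib_left mult.assoc)
    show "\<forall>y. (\<forall>pq\<in>{..<n} \<times> {..<n}. f pq y = 0) \<longrightarrow> (\<Sum>i<m. y i * h i) = 0"
      using annihilates unfolding f_def by force
  qed simp
  then obtain r where r: "\<And>y. (\<Sum>i<m. y i * h i) = (\<Sum>pq\<in>{..<n} \<times> {..<n}. r pq * f pq y)"
    by blast
  define r' where "r' pq = (if d \<le> fst pq \<and> d \<le> snd pq then r pq else 0)" for pq
  have h_r': "h i = (\<Sum>a<n. \<Sum>c<n. G i $$ (a, c) * r' (a, c))" if "i < m" for i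
  proof -
    have delta: "(\<Sum>k<m. of_bool (k = i) * \<phi> k) = \<phi> i" for \<phi> :: "nat \<Rightarrow> real"
      using that by simp
    show ?thesis
      using r[of "\<lambda>k. of_bool (k = i)"] unfolding f_def r'_def delta
      by (simp add: sum.cartesian_product) (auto intro!: sum.cong)
  qed
  define S where "S pq = (r' pq + r' (prod.swap pq)) / 2" for pq
  have "h i = (\<Sum>a<n. \<Sum>c<n. G i $$ (a, c) * S (a, c))" if "i < m" for i
  proof -
    have "(\<Sum>a<n. \<Sum>c<n. G i $$ (a, c) * S (a, c)) =
        ((\<Sum>a<n. \<Sum>c<n. G i $$ (a, c) * r' (a, c)) + (\<Sum>a<n. \<Sum>c<n. G i $$ (a, c) * r' (c, a))) / 2"
      unfolding S_def by (simp add: sum.distrib[symmetric] sum_divide_distrib distrib_left)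
    then show ?thesis
      using h_r'[OF that] symmetric_mat_sum_swap[of n "G i" r'] G that by simp
  qed
  moreover have "\<forall>a c. S (a, c) = S (c, a)" "\<forall>a c. \<not> (d \<le> a \<and> d \<le> c) \<longrightarrow> S (a, c) = 0"
    unfolding S_def r'_def by auto
  ultimately show ?thesis by blast
qed

lemma R_block_compensates_Z_block:
  fixes G :: "nat \<Rightarrow> real mat"
  assumes "d \<le> n" "\<forall>i<m. symmetric_mat n (G i)" "symmetric_mat n B"
    and adjoint_kernel: "\<forall>y. (\<forall>p<n. \<forall>q<n. d \<le> p \<longrightarrow> d \<le> q \<longrightarrow> (\<Sum>i<m. y i * G i $$ (p, q)) = 0) \<longrightarrow>
        (\<forall>p<n. \<forall>q<d. d \<le> p \<longrightarrow> (\<Sum>i<m. y i * G i $$ (p, q)) = 0)"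
  shows "\<exists>D. symmetric_mat n D \<and> (\<forall>a<d. \<forall>c<d. D $$ (a, c) = 0) \<and>
    (\<forall>a<d. \<forall>c<n. d \<le> c \<longrightarrow> D $$ (a, c) = - B $$ (a, c)) \<and> (\<forall>i<m. tinner (G i) D = 0)"
proof -
  define Z where "Z = (\<lambda>(a, c). if (a < d) = (c < d) then 0 else B $$ (a, c))"
  have annihilates: "\<forall>y. (\<forall>p<n. \<forall>q<n. d \<le> p \<longrightarrow> d \<le> q \<longrightarrow> (\<Sum>i<m. y i * G i $$ (p, q)) = 0) \<longrightarrow>
      (\<Sum>i<m. y i * (\<Sum>a<n. \<Sum>c<n. G i $$ (a, c) * Z (a, c))) = 0"
  proof (intro allI impI)
    fix y assume "\<forall>p<n. \<forall>q<n. d \<le> p \<longrightarrow> d \<le> q \<longrightarrow> (\<Sum>i<m. y i * G i $$ (p, q)) = 0"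
    then have lower_left: "(\<Sum>i<m. y i * G i $$ (p, q)) = 0" if "p < n" "q < d" "d \<le> p" for p q
      using adjoint_kernel that by blast
    have "(\<Sum>i<m. y i * G i $$ (a, c)) * Z (a, c) = 0" if "a < n" "c < n" for a c
    proof -
      have "(\<Sum>i<m. y i * G i $$ (a, c)) = (\<Sum>i<m. y i * G i $$ (c, a))"
        using assms(2) that by (auto simp: symmetric_matD intro!: sum.cong)
      then show ?thesis
        using lower_left[of a c] lower_left[of c a] that unfolding Z_def by auto
    qed
    then have "(\<Sum>a<n. \<Sum>c<n. (\<Sum>i<m. y i * G i $$ (a, c)) * Z (a, c)) = 0"
      by (intro sum.neutral ballI) simp
    then show "(\<Sum>i<m. y i * (\<Sum>a<n. \<Sum>c<n. G i $$ (a, c) * Z (a, c))) = 0"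
      by (simp add: sum_distrib_left sum_distrib_right mult.assoc sum.swap[of _ "{..<m}"])
  qed
  obtain S where S: "\<forall>a c. S (a, c) = S (c, a)" "\<forall>a c. \<not> (d \<le> a \<and> d \<le> c) \<longrightarrow> S (a, c) = 0"
    "\<forall>i<m. (\<Sum>a<n. \<Sum>c<n. G i $$ (a, c) * Z (a, c)) = (\<Sum>a<n. \<Sum>c<n. G i $$ (a, c) * S (a, c))"
    using lower_right_block_range[OF assms(2), where h = "\<lambda>i. \<Sum>a<n. \<Sum>c<n. G i $$ (a, c) * Z (a, c)", OF annihilates]
    by blast
  define D where "D = mat n n (\<lambda>ac. S ac - Z ac)"
  have "S (a, c) - Z (a, c) = S (c, a) - Z (c, a)" if "a < n" "c < n" for a c
    using S(1) symmetric_matD[OF assms(3) that] unfolding Z_def by simp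
  then have "symmetric_mat n D"
    unfolding D_def by (intro symmetric_matI) auto
  moreover have "\<forall>a<d. \<forall>c<d. D $$ (a, c) = 0" "\<forall>a<d. \<forall>c<n. d \<le> c \<longrightarrow> D $$ (a, c) = - B $$ (a, c)"
    using assms(1) S(2) unfolding D_def Z_def by auto
  moreover have "tinner (G i) D = 0" if "i < m" for i
  proof -
    have "symmetric_mat n (G i)" using assms(2) that by blast
    then have "tinner (G i) D = (\<Sum>a<n. \<Sum>c<n. G i $$ (a, c) * S (a, c)) - (\<Sum>a<n. \<Sum>c<n. G i $$ (a, c) * Z (a, c))"
      unfolding D_def by (simp add: tinner_symmetric_left right_diff_distrib sum_subtractf)
    then show ?thesis
      using S(3) that by simp
  qed
  ultimately show ?thesis by blast
qed

lemma dual_condition_shift: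
  fixes G :: "nat \<Rightarrow> real mat"
  assumes "y0 \<in> carrier_vec m"
    and lower_rows: "\<forall>p<n. \<forall>q<n. d \<le> p \<longrightarrow> Lmap n m G0 G y0 $$ (p, q) = 0"
    and dual: "\<forall>y\<in>carrier_vec m. (\<forall>p<n. \<forall>q<n. d \<le> p \<longrightarrow> d \<le> q \<longrightarrow> Lmap n m G0 G y $$ (p, q) = 0) \<longrightarrow>
        (\<forall>p<n. \<forall>q<d. d \<le> p \<longrightarrow> Lmap n m G0 G y $$ (p, q) = 0)"
  shows "\<forall>y. (\<forall>p<n. \<forall>q<n. d \<le> p \<longrightarrow> d \<le> q \<longrightarrow> (\<Sum>i<m. y i * G i $$ (p, q)) = 0) \<longrightarrow>
    (\<forall>p<n. \<forall>q<d. d \<le> p \<longrightarrow> (\<Sum>i<m. y i * G i $$ (p, q)) = 0)"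
proof (intro allI impI)
  fix y p q
  assume lower_right: "\<forall>p<n. \<forall>q<n. d \<le> p \<longrightarrow> d \<le> q \<longrightarrow> (\<Sum>i<m. y i * G i $$ (p, q)) = 0"
    and pq: "p < n" "q < d" "d \<le> p"
  define y1 where "y1 = vec m (\<lambda>i. y0 $ i + y i)"
  have shift: "Lmap n m G0 G y1 $$ (a, c) = Lmap n m G0 G y0 $$ (a, c) - (\<Sum>i<m. y i * G i $$ (a, c))"
    if "a < n" "c < n" for a c
    using that unfolding y1_def by (simp add: index_Lmap distrib_right sum.distrib)
  have "y1 \<in> carrier_vec m" unfolding y1_def by simp
  moreover have "\<forall>p<n. \<forall>q<n. d \<le> p \<longrightarrow> d \<le> q \<longrightarrow> Lmap n m G0 G y1 $$ (p, q) = 0"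
    using shift lower_rows lower_right by simp
  ultimately have "Lmap n m G0 G y1 $$ (p, q) = 0"
    using dual pq by blast
  then show "(\<Sum>i<m. y i * G i $$ (p, q)) = 0"
    using shift lower_rows pq by simp
qed

lemma direction_clearing_Z_block:
  fixes G :: "nat \<Rightarrow> real mat"
  assumes "d \<le> n" "symmetric_mat n G0" "\<forall>i<m. symmetric_mat n (G i)" "symmetric_mat n B"
    and first_order: "\<forall>D. symmetric_mat n D \<longrightarrow> (\<forall>a<d. \<forall>c<d. D $$ (a, c) = 0) \<longrightarrow>
        (\<forall>i<m. tinner (G i) D = 0) \<longrightarrow> 0 \<le> tinner G0 D"
    and dual: "\<forall>y\<in>carrier_vec m. (\<forall>p<n. \<forall>q<n. d \<le> p \<longrightarrow> d \<le> q \<longrightarrow> Lmap n m G0 G y $$ (p, q) = 0) \<longrightarrow>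
        (\<forall>p<n. \<forall>q<d. d \<le> p \<longrightarrow> Lmap n m G0 G y $$ (p, q) = 0)"
  shows "\<exists>D. symmetric_mat n D \<and> (\<forall>a<d. \<forall>c<d. D $$ (a, c) = 0) \<and>
    (\<forall>a<d. \<forall>c<n. d \<le> c \<longrightarrow> D $$ (a, c) = - B $$ (a, c)) \<and>
    (\<forall>i<m. tinner (G i) D = 0) \<and> tinner G0 D = 0"
proof -
  obtain y0 where y0: "y0 \<in> carrier_vec m"
    and off_block: "\<forall>a<n. \<forall>c<n. \<not> (a < d \<and> c < d) \<longrightarrow> Lmap n m G0 G y0 $$ (a, c) = 0"
    using off_block_multiplier[OF assms(1-3) first_order] by blast
  have "\<forall>p<n. \<forall>q<n. d \<le> p \<longrightarrow> Lmap n m G0 G y0 $$ (p, q) = 0"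
    using off_block by simp
  then obtain D where D: "symmetric_mat n D" "\<forall>a<d. \<forall>c<d. D $$ (a, c) = 0"
    "\<forall>a<d. \<forall>c<n. d \<le> c \<longrightarrow> D $$ (a, c) = - B $$ (a, c)" "\<forall>i<m. tinner (G i) D = 0"
    using R_block_compensates_Z_block[OF assms(1,3,4) dual_condition_shift[OF y0 _ dual]] by blast
  have carrier: "G0 \<in> carrier_mat n n" "\<forall>i<m. G i \<in> carrier_mat n n" "D \<in> carrier_mat n n"
    using assms(2,3) D(1) unfolding symmetric_mat_def by auto
  \<comment> \<open>\<open>G0\<close> agrees with \<open>\<Sum>i. y0 i G i\<close> wherever \<open>D\<close> may be nonzero.\<close>
  have "tinner (Lmap n m G0 G y0) D = (\<Sum>a<n. \<Sum>c<n. Lmap n m G0 G y0 $$ (a, c) * D $$ (c, a))"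
    using carrier(3) by (intro tinner_eq_sum) (auto simp: Lmap_def)
  also have "\<dots> = 0"
    using off_block D(2) by (intro sum.neutral ballI) auto
  finally have "tinner G0 D = 0"
    using D(4) carrier by (simp add: tinner_Lmap)
  with D show ?thesis by blast
qed

lemma index_transpose_mult_mult:
  assumes "X \<in> carrier_mat n a" "M \<in> carrier_mat n n" "Y \<in> carrier_mat n b" "i < a" "j < b"
  shows "(transpose_mat X * M * Y) $$ (i, j) = (\<Sum>l<n. \<Sum>k<n. X $$ (l, i) * M $$ (l, k) * Y $$ (k, j))"
  using assms
  by (auto simp: scalar_prod_def atLeast0LessThan sum_distrib_left sum_distrib_right mult.assoc
      intro!: sum.cong)

lemma Lmap_congruence:
  assumes "P \<in> carrier_mat n n" "C \<in> carrier_mat n n" "\<forall>k<m. A k \<in> carrier_mat n n"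
  shows "transpose_mat P * Lmap n m C A y * P =
    Lmap n m (transpose_mat P * C * P) (\<lambda>k. transpose_mat P * A k * P) y"
proof (rule eq_matI)
  fix i j assume "i < dim_row (Lmap n m (transpose_mat P * C * P) (\<lambda>k. transpose_mat P * A k * P) y)"
    "j < dim_col (Lmap n m (transpose_mat P * C * P) (\<lambda>k. transpose_mat P * A k * P) y)"
  then have ij: "i < n" "j < n" by (auto simp: Lmap_def)
  have L: "Lmap n m C A y \<in> carrier_mat n n" by (simp add: Lmap_def)
  have "(transpose_mat P * Lmap n m C A y * P) $$ (i, j) =
      (\<Sum>l<n. \<Sum>k<n. P $$ (l, i) * Lmap n m C A y $$ (l, k) * P $$ (k, j))"
    by (rule index_transpose_mult_mult[OF assms(1) L assms(1) ij])
  also have "\<dots> = (\<Sum>l<n. \<Sum>k<n. P $$ (l, i) * (C $$ (l, k) - (\<Sum>t<m. y $ t * A t $$ (l, k))) * P $$ (k, j))"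
    by (simp add: index_Lmap)
  also have "\<dots> = (\<Sum>l<n. \<Sum>k<n. P $$ (l, i) * C $$ (l, k) * P $$ (k, j)) -
      (\<Sum>t<m. y $ t * (\<Sum>l<n. \<Sum>k<n. P $$ (l, i) * A t $$ (l, k) * P $$ (k, j)))"
    by (simp add: algebra_simps sum_subtractf sum_distrib_left sum_distrib_right sum.swap[of _ "{..<m}"])
  also have "\<dots> = (transpose_mat P * C * P) $$ (i, j) - (\<Sum>t<m. y $ t * (transpose_mat P * A t * P) $$ (i, j))"
  proof -
    have "(transpose_mat P * A t * P) $$ (i, j) = (\<Sum>l<n. \<Sum>k<n. P $$ (l, i) * A t $$ (l, k) * P $$ (k, j))"
      if "t < m" for t
      using assms(3) that by (intro index_transpose_mult_mult[OF assms(1) _ assms(1) ij]) auto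
    then show ?thesis
      unfolding index_transpose_mult_mult[OF assms(1,2,1) ij] by (intro arg_cong2[where f = minus] refl sum.cong) auto
  qed
  also have "\<dots> = Lmap n m (transpose_mat P * C * P) (\<lambda>k. transpose_mat P * A k * P) y $$ (i, j)"
    using ij by (simp only: index_Lmap)
  finally show "(transpose_mat P * Lmap n m C A y * P) $$ (i, j) =
      Lmap n m (transpose_mat P * C * P) (\<lambda>k. transpose_mat P * A k * P) y $$ (i, j)" .
qed (use assms(1) in \<open>simp_all add: Lmap_def\<close>)

lemma index_concat_cols:
  assumes "l < n" "j < n"
  shows "concat_cols n d U V $$ (l, j) = (if j < d then U $$ (l, j) else V $$ (l, j - d))"
  using assms unfolding concat_cols_def by simp

lemma concat_cols_congruence_blocks:
  assumes "U \<in> carrier_mat n d" "V \<in> carrier_mat n (n - d)" "M \<in> carrier_mat n n" "p < n - d"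
  shows "q < n - d \<Longrightarrow> (transpose_mat (concat_cols n d U V) * M * concat_cols n d U V) $$ (d + p, d + q) =
      (transpose_mat V * M * V) $$ (p, q)"
    and "q < d \<Longrightarrow> (transpose_mat (concat_cols n d U V) * M * concat_cols n d U V) $$ (d + p, q) =
      (transpose_mat V * M * U) $$ (p, q)"
proof -
  have P: "concat_cols n d U V \<in> carrier_mat n n" unfolding concat_cols_def by simp
  have "d + p < n" using assms(4) by simp
  show "(transpose_mat (concat_cols n d U V) * M * concat_cols n d U V) $$ (d + p, d + q) =
      (transpose_mat V * M * V) $$ (p, q)" if q: "q < n - d"
  proof -
    have "(transpose_mat (concat_cols n d U V) * M * concat_cols n d U V) $$ (d + p, d + q) =
        (\<Sum>l<n. \<Sum>k<n. V $$ (l, p) * M $$ (l, k) * V $$ (k, q))"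
      using \<open>d + p < n\<close> q by (simp add: index_transpose_mult_mult[OF P assms(3) P] index_concat_cols)
    also have "\<dots> = (transpose_mat V * M * V) $$ (p, q)"
      by (rule index_transpose_mult_mult[OF assms(2,3,2) assms(4) q, symmetric])
    finally show ?thesis .
  qed
  show "(transpose_mat (concat_cols n d U V) * M * concat_cols n d U V) $$ (d + p, q) =
      (transpose_mat V * M * U) $$ (p, q)" if q: "q < d"
  proof -
    have "(transpose_mat (concat_cols n d U V) * M * concat_cols n d U V) $$ (d + p, q) =
        (\<Sum>l<n. \<Sum>k<n. V $$ (l, p) * M $$ (l, k) * U $$ (k, q))"
      using \<open>d + p < n\<close> q by (simp add: index_transpose_mult_mult[OF P assms(3) P] index_concat_cols)
    also have "\<dots> = (transpose_mat V * M * U) $$ (p, q)"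
      by (rule index_transpose_mult_mult[OF assms(2,3,1) assms(4) q, symmetric])
    finally show ?thesis .
  qed
qed

lemma dual_condition_congruence:
  fixes n d :: nat and U V :: "real mat" and A :: "nat \<Rightarrow> real mat"
  defines "P \<equiv> concat_cols n d U V"
  assumes "C \<in> carrier_mat n n" "\<forall>k<m. A k \<in> carrier_mat n n"
    and "U \<in> carrier_mat n d" "V \<in> carrier_mat n (n - d)"
    and dual: "{y \<in> carrier_vec m. transpose_mat V * Lmap n m C A y * V = 0\<^sub>m (n - d) (n - d)} =
         {y \<in> carrier_vec m. transpose_mat V * Lmap n m C A y * V = 0\<^sub>m (n - d) (n - d) \<and>
                              transpose_mat V * Lmap n m C A y * U = 0\<^sub>m (n - d) d}"
  shows "\<forall>y\<in>carrier_vec m.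
    (\<forall>p<n. \<forall>q<n. d \<le> p \<longrightarrow> d \<le> q \<longrightarrow>
      Lmap n m (transpose_mat P * C * P) (\<lambda>k. transpose_mat P * A k * P) y $$ (p, q) = 0) \<longrightarrow>
    (\<forall>p<n. \<forall>q<d. d \<le> p \<longrightarrow>
      Lmap n m (transpose_mat P * C * P) (\<lambda>k. transpose_mat P * A k * P) y $$ (p, q) = 0)"
proof (intro ballI impI allI)
  fix y p q
  assume y: "y \<in> carrier_vec m"
    and lower_right: "\<forall>p<n. \<forall>q<n. d \<le> p \<longrightarrow> d \<le> q \<longrightarrow>
      Lmap n m (transpose_mat P * C * P) (\<lambda>k. transpose_mat P * A k * P) y $$ (p, q) = 0"
    and pq: "p < n" "q < d" "d \<le> p"
  define L where "L = Lmap n m C A y"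
  have L: "L \<in> carrier_mat n n" unfolding L_def Lmap_def by simp
  have P: "P \<in> carrier_mat n n" unfolding P_def concat_cols_def by simp
  have PLP: "transpose_mat P * L * P = Lmap n m (transpose_mat P * C * P) (\<lambda>k. transpose_mat P * A k * P) y"
    unfolding L_def using Lmap_congruence[OF P assms(2,3)] .
  have "transpose_mat V * L * V = 0\<^sub>m (n - d) (n - d)"
  proof (rule eq_matI)
    fix i j assume "i < dim_row (0\<^sub>m (n - d) (n - d))" "j < dim_col (0\<^sub>m (n - d) (n - d))"
    then have "i < n - d" "j < n - d" by auto
    then show "(transpose_mat V * L * V) $$ (i, j) = 0\<^sub>m (n - d) (n - d) $$ (i, j)"
      using concat_cols_congruence_blocks(1)[OF assms(4,5) L, of i j] lower_right
      unfolding P_def[symmetric] PLP by simp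
  qed (use assms(5) in auto)
  then have "transpose_mat V * L * U = 0\<^sub>m (n - d) d"
    using dual y unfolding L_def by blast
  then have "(transpose_mat V * L * U) $$ (p - d, q) = 0"
    using pq by simp
  then show "Lmap n m (transpose_mat P * C * P) (\<lambda>k. transpose_mat P * A k * P) y $$ (p, q) = 0"
    using concat_cols_congruence_blocks(2)[OF assms(4,5) L, of "p - d" q] pq
    unfolding P_def[symmetric] PLP by simp
qed

definition upper_right_block :: "nat \<Rightarrow> nat \<Rightarrow> real mat \<Rightarrow> real mat" where
  "upper_right_block n d D = mat d (n - d) (\<lambda>(i, j). D $$ (i, d + j))"

definition lower_right_block :: "nat \<Rightarrow> nat \<Rightarrow> real mat \<Rightarrow> real mat" where
  "lower_right_block n d D = mat (n - d) (n - d) (\<lambda>(i, j). D $$ (d + i, d + j))"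

lemma symmetric_four_block_mat:
  assumes "d \<le> n" "symmetric_mat d W" "Z \<in> carrier_mat d (n - d)" "symmetric_mat (n - d) R"
  shows "symmetric_mat n (four_block_mat W Z (transpose_mat Z) R)"
proof -
  have W: "W \<in> carrier_mat d d" "transpose_mat W = W"
    and R: "R \<in> carrier_mat (n - d) (n - d)" "transpose_mat R = R"
    using assms(2,4) unfolding symmetric_mat_def by auto
  have "transpose_mat (four_block_mat W Z (transpose_mat Z) R) = four_block_mat W Z (transpose_mat Z) R"
    using transpose_four_block_mat[OF W(1) assms(3) _ R(1)] W R assms(3) by simp
  moreover have "four_block_mat W Z (transpose_mat Z) R \<in> carrier_mat n n"
    using four_block_carrier_mat[OF W(1) R(1)] assms(1) by simp
  ultimately show ?thesis unfolding symmetric_mat_def by simp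
qed

lemma four_block_mat_add_direction:
  assumes "d \<le> n" "W \<in> carrier_mat d d" "Z \<in> carrier_mat d (n - d)" "R \<in> carrier_mat (n - d) (n - d)"
    and "symmetric_mat n D" "\<forall>a<d. \<forall>c<d. D $$ (a, c) = 0"
  shows "four_block_mat W (Z + upper_right_block n d D) (transpose_mat (Z + upper_right_block n d D))
      (R + lower_right_block n d D) = four_block_mat W Z (transpose_mat Z) R + D"
  using assms symmetric_matD[OF assms(5)] unfolding symmetric_mat_def upper_right_block_def lower_right_block_def
  by (intro eq_matI) auto

lemma tinner_Xof:
  assumes "d \<le> n" "M \<in> carrier_mat n n" "W \<in> carrier_mat d d" "R \<in> carrier_mat (n - d) (n - d)"
  shows "tinner M (Xof n d U V W Z R) =
    tinner (transpose_mat (concat_cols n d U V) * M * concat_cols n d U V) (four_block_mat W Z (transpose_mat Z) R)"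
proof -
  have "four_block_mat W Z (transpose_mat Z) R \<in> carrier_mat (d + (n - d)) (d + (n - d))"
    using assms(3,4) by simp
  then show ?thesis
    unfolding Xof_def using assms by (intro tinner_congruence) (auto simp: concat_cols_def)
qed

lemma tinner_Xof_add_direction:
  assumes "d \<le> n" "M \<in> carrier_mat n n"
    and "W \<in> carrier_mat d d" "Z \<in> carrier_mat d (n - d)" "R \<in> carrier_mat (n - d) (n - d)"
    and "symmetric_mat n D" "\<forall>a<d. \<forall>c<d. D $$ (a, c) = 0"
  shows "tinner M (Xof n d U V W (Z + upper_right_block n d D) (R + lower_right_block n d D)) =
    tinner M (Xof n d U V W Z R) + tinner (transpose_mat (concat_cols n d U V) * M * concat_cols n d U V) D"
proof -
  let ?G = "transpose_mat (concat_cols n d U V) * M * concat_cols n d U V"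
  have "?G \<in> carrier_mat n n" "D \<in> carrier_mat n n"
    using assms(2,6) unfolding symmetric_mat_def concat_cols_def by auto
  moreover have "four_block_mat W Z (transpose_mat Z) R \<in> carrier_mat n n"
    using assms(1,3,5) four_block_carrier_mat[OF assms(3,5)] by simp
  moreover have "R + lower_right_block n d D \<in> carrier_mat (n - d) (n - d)"
    using assms(5) unfolding lower_right_block_def by simp
  ultimately show ?thesis
    using assms by (simp add: tinner_Xof four_block_mat_add_direction tinner_add_right[of _ n])
qed

lemma RD_feasible_carrier:
  assumes "RD_feasible n d m A b U V W Z R"
  shows "W \<in> carrier_mat d d" "Z \<in> carrier_mat d (n - d)" "R \<in> carrier_mat (n - d) (n - d)"
  using assms unfolding RD_feasible_def psd_mat_def symmetric_mat_def by auto

lemma RD_feasible_add_direction: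
  assumes "d \<le> n" "\<forall>i<m. A i \<in> carrier_mat n n" "RD_feasible n d m A b U V W Z R"
    and "symmetric_mat n D" "\<forall>a<d. \<forall>c<d. D $$ (a, c) = 0"
    and "\<forall>i<m. tinner (transpose_mat (concat_cols n d U V) * A i * concat_cols n d U V) D = 0"
  shows "RD_feasible n d m A b U V W (Z + upper_right_block n d D) (R + lower_right_block n d D)"
proof -
  note carrier = RD_feasible_carrier[OF assms(3)]
  have "symmetric_mat (n - d) R" using assms(3) unfolding RD_feasible_def by blast
  then have "symmetric_mat (n - d) (R + lower_right_block n d D)"
    using carrier(3) symmetric_matD[OF assms(4)] unfolding lower_right_block_def
    by (intro symmetric_matI) (auto simp: symmetric_matD)
  moreover have "Z + upper_right_block n d D \<in> carrier_mat d (n - d)"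
    using carrier(2) unfolding upper_right_block_def by simp
  moreover have "tinner (A i) (Xof n d U V W (Z + upper_right_block n d D) (R + lower_right_block n d D)) = b $ i"
    if "i < m" for i
    using assms that carrier tinner_Xof_add_direction[OF assms(1) _ carrier assms(4,5)]
    unfolding RD_feasible_def by simp
  ultimately show ?thesis
    using assms(3) unfolding RD_feasible_def by blast
qed

lemma RD_optimal_first_order:
  assumes "d \<le> n" "C \<in> carrier_mat n n" "\<forall>i<m. A i \<in> carrier_mat n n"
    and "RD_optimal n d m C A b U V W Z R"
  shows "\<forall>D. symmetric_mat n D \<longrightarrow> (\<forall>a<d. \<forall>c<d. D $$ (a, c) = 0) \<longrightarrow>
    (\<forall>i<m. tinner (transpose_mat (concat_cols n d U V) * A i * concat_cols n d U V) D = 0) \<longrightarrow>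
    0 \<le> tinner (transpose_mat (concat_cols n d U V) * C * concat_cols n d U V) D"
proof (intro allI impI)
  fix D
  assume D: "symmetric_mat n D" "\<forall>a<d. \<forall>c<d. D $$ (a, c) = 0"
    and kernel: "\<forall>i<m. tinner (transpose_mat (concat_cols n d U V) * A i * concat_cols n d U V) D = 0"
  have feasible: "RD_feasible n d m A b U V W Z R"
    using assms(4) unfolding RD_optimal_def by blast
  then have "RD_feasible n d m A b U V W (Z + upper_right_block n d D) (R + lower_right_block n d D)"
    using RD_feasible_add_direction[OF assms(1,3) _ D kernel] by blast
  then have "tinner C (Xof n d U V W Z R) \<le>
      tinner C (Xof n d U V W (Z + upper_right_block n d D) (R + lower_right_block n d D))"
    using assms(4) unfolding RD_optimal_def by blast
  then show "0 \<le> tinner (transpose_mat (concat_cols n d U V) * C * concat_cols n d U V) D"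
    using tinner_Xof_add_direction[OF assms(1,2) RD_feasible_carrier[OF feasible] D] by simp
qed

theorem mainTheorem12:
  fixes n d m :: nat and C :: "real mat" and A :: "nat \<Rightarrow> real mat" and b :: "real vec"
    and U V :: "real mat"
  assumes "d \<le> n"
    and "symmetric_mat n C"
    and "\<forall>i<m. symmetric_mat n (A i)"
    and "b \<in> carrier_vec m"
    and "U \<in> carrier_mat n d" and "V \<in> carrier_mat n (n - d)"
    and "invertible_mat (concat_cols n d U V)"
    and "transpose_mat U * V = 0\<^sub>m d (n - d)"
    and "\<exists>W Z R. RD_optimal n d m C A b U V W Z R"
    and "{y \<in> carrier_vec m. transpose_mat V * Lmap n m C A y * V = 0\<^sub>m (n - d) (n - d)} =
         {y \<in> carrier_vec m. transpose_mat V * Lmap n m C A y * V = 0\<^sub>m (n - d) (n - d) \<and>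
                              transpose_mat V * Lmap n m C A y * U = 0\<^sub>m (n - d) d}"
  shows "\<exists>W R. RD_optimal n d m C A b U V W (0\<^sub>m d (n - d)) R"
proof -
  let ?P = "concat_cols n d U V"
  have P: "?P \<in> carrier_mat n n" unfolding concat_cols_def by simp
  have carrier: "C \<in> carrier_mat n n" "\<forall>i<m. A i \<in> carrier_mat n n"
    using assms(2,3) unfolding symmetric_mat_def by auto
  obtain W Z R where opt: "RD_optimal n d m C A b U V W Z R" using assms(9) by blast
  then have feasible: "RD_feasible n d m A b U V W Z R" unfolding RD_optimal_def by blast
  note block_carrier = RD_feasible_carrier[OF feasible]
  have "symmetric_mat n (four_block_mat W Z (transpose_mat Z) R)"
    using feasible assms(1) unfolding RD_feasible_def psd_mat_def by (blast intro: symmetric_four_block_mat)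
  moreover have "\<forall>i<m. symmetric_mat n (transpose_mat ?P * A i * ?P)"
    using assms(3) symmetric_congruence[OF _ P] by blast
  ultimately obtain D where D: "symmetric_mat n D" "\<forall>a<d. \<forall>c<d. D $$ (a, c) = 0"
      "\<forall>a<d. \<forall>c<n. d \<le> c \<longrightarrow> D $$ (a, c) = - four_block_mat W Z (transpose_mat Z) R $$ (a, c)"
      "\<forall>i<m. tinner (transpose_mat ?P * A i * ?P) D = 0" "tinner (transpose_mat ?P * C * ?P) D = 0"
    using direction_clearing_Z_block[OF assms(1) symmetric_congruence[OF assms(2) P] _ _
        RD_optimal_first_order[OF assms(1) carrier opt] dual_condition_congruence[OF carrier assms(5,6,10)]]
    by blast
  have "Z + upper_right_block n d D = 0\<^sub>m d (n - d)"
    using D(3) block_carrier unfolding upper_right_block_def by (intro eq_matI) auto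
  moreover have "RD_feasible n d m A b U V W (Z + upper_right_block n d D) (R + lower_right_block n d D)"
    using RD_feasible_add_direction[OF assms(1) carrier(2) feasible D(1,2)] D(4) by blast
  moreover have "tinner C (Xof n d U V W (Z + upper_right_block n d D) (R + lower_right_block n d D)) =
      tinner C (Xof n d U V W Z R)"
    using tinner_Xof_add_direction[OF assms(1) carrier(1) block_carrier D(1,2)] D(5) by simp
  ultimately have "RD_optimal n d m C A b U V W (0\<^sub>m d (n - d)) (R + lower_right_block n d D)"
    using opt unfolding RD_optimal_def by simp
  then show ?thesis by blast
qed

end
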